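(* Let $(X,\mathcal{O}(X))$ be a measurable space, $\mathcal{A}$ a unital $C^*$-algebra and $\mathcal{H}$ a Hilbert space. Let $\mathcal{I}:\mathcal{O}(X)\to CP(\mathcal{A},\mathcal{B}(\mathcal{H}))$ be a CP instrument with minimal bi-dilation $(\mathcal{K},\pi,E,V)$. Then for any $A\in\mathcal{O}(X)$, $\mathcal{I}(A)=0$ if and only if $(\pi E)(A)=0$. In particular, for $S\in\mathcal{O}(X)$, $\mathcal{I}$ is concentrated on $S$ if and only if $\pi E$ is concentrated on $S$.
   Context: A CP instrument is a map $\mathcal{I}$ from $\mathcal{O}(X)$ to the completely positive maps $\mathcal{A}\to\mathcal{B}(\mathcal{H})$ such that for all $a\in\mathcal{A}$, $h,k\in\mathcal{H}$, $A\mapsto\langle h,\mathcal{I}(A)(a)k\rangle$ is a countably additive complex measure; write $\mathcal{I}(A,a)=\mathcal{I}(A)(a)$. A minimal bi-dilation is a quadruple $(\mathcal{K},\pi,E,V)$ with $\pi:\mathcal{A}\to\mathcal{B}(\mathcal{K})$ a unital $*$-homomorphism, $E:\mathcal{O}(X)\to\mathcal{B}(\mathcal{K})$ a spectral measure commuting with $\pi$, $V\in\mathcal{B}(\mathcal{H},\mathcal{K})$, with $\mathcal{I}(A,a)=V^*\pi(a)E(A)V$ and $\overline{\mathrm{span}}\{\pi(a)E(A)Vh\}=\mathcal{K}$. $\pi E$ is the instrument $(\pi E)(A)(a)=\pi(a)E(A)$. An instrument $\mathcal{J}$ is concentrated on $S$ if $\mathcal{J}(A)=\mathcal{J}(A\cap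 S)$ for all $A\in\mathcal{O}(X)$. *)

theory Defs
  imports "HOL-Probability.Probability"
begin

class complex_vector = real_vector +
  fixes scaleC :: "complex \<Rightarrow> 'a \<Rightarrow> 'a" (infixr "*\<^sub>C" 75)
  assumes scaleC_add_right: "c *\<^sub>C (x + y) = c *\<^sub>C x + c *\<^sub>C y"
    and scaleC_add_left: "(c + d) *\<^sub>C x = c *\<^sub>C x + d *\<^sub>C x"
    and scaleC_scaleC: "c *\<^sub>C (d *\<^sub>C x) = (c * d) *\<^sub>C x"
    and scaleC_one: "1 *\<^sub>C x = x"
    and scaleR_scaleC: "r *\<^sub>R x = complex_of_real r *\<^sub>C x"

text \<open>Complex inner product space; the real inner product of the underlying real
  space (which induces norm and topology) is the real part of the complex one.\<close>
class complex_inner = complex_vector + real_inner +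
  fixes cinner :: "'a \<Rightarrow> 'a \<Rightarrow> complex"
  assumes cinner_cnj: "cinner x y = cnj (cinner y x)"
    and cinner_add_right: "cinner x (y + z) = cinner x y + cinner x z"
    and cinner_scaleC_right: "cinner x (c *\<^sub>C y) = c * cinner x y"
    and inner_Re_cinner: "inner x y = Re (cinner x y)"

class chilbert = complex_inner + complete_space

class cstar_algebra = complex_vector + real_normed_algebra_1 + banach +
  fixes cstar :: "'a \<Rightarrow> 'a"
  assumes norm_scaleC: "norm (c *\<^sub>C x) = cmod c * norm x"
    and scaleC_mult_left: "(c *\<^sub>C x) * y = c *\<^sub>C (x * y)"
    and scaleC_mult_right: "x * (c *\<^sub>C y) = c *\<^sub>C (x * y)"
    and cstar_cstar: "cstar (cstar x) = x"
    and cstar_add: "cstar (x + y) = cstar x + cstar y"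
    and cstar_scaleC: "cstar (c *\<^sub>C x) = cnj c *\<^sub>C cstar x"
    and cstar_mult: "cstar (x * y) = cstar y * cstar x"
    and cstar_identity: "norm (cstar x * x) = (norm x)^2"

definition clinear :: "('a::complex_vector \<Rightarrow> 'b::complex_vector) \<Rightarrow> bool" where
  "clinear f \<longleftrightarrow> (\<forall>x y. f (x + y) = f x + f y) \<and> (\<forall>c x. f (c *\<^sub>C x) = c *\<^sub>C f x)"

definition bounded_op :: "('a::complex_inner \<Rightarrow> 'b::complex_inner) \<Rightarrow> bool" where
  "bounded_op f \<longleftrightarrow> clinear f \<and> (\<exists>C. \<forall>x. norm (f x) \<le> C * norm x)"

definition cspan :: "'a::complex_vector set \<Rightarrow> 'a set" where
  "cspan S = {y. \<exists>F c. finite F \<and> F \<subseteq> S \<and> y = (\<Sum>s\<in>F. c s *\<^sub>C s)}"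

definition cnonneg :: "complex \<Rightarrow> bool" where
  "cnonneg z \<longleftrightarrow> Im z = 0 \<and> 0 \<le> Re z"

text \<open>Completely positive map A -> B(H): linear, B(H)-valued, and for every n the
  amplification to M_n(A) -> M_n(B(H)) = B(H^n) maps positive matrices Y^* Y to
  positive operators.\<close>
definition cp_map :: "('a::cstar_algebra \<Rightarrow> 'h::chilbert \<Rightarrow> 'h) \<Rightarrow> bool" where
  "cp_map \<phi> \<longleftrightarrow>
     (\<forall>a b. \<phi> (a + b) = (\<lambda>x. \<phi> a x + \<phi> b x)) \<and>
     (\<forall>c a. \<phi> (c *\<^sub>C a) = (\<lambda>x. c *\<^sub>C \<phi> a x)) \<and>
     (\<forall>a. bounded_op (\<phi> a)) \<and>
     (\<forall>(n::nat) (Y::nat \<Rightarrow> nat \<Rightarrow> 'a) (\<xi>::nat \<Rightarrow> 'h).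
        cnonneg (\<Sum>i<n. \<Sum>j<n. cinner (\<xi> i) (\<phi> (\<Sum>k<n. cstar (Y k i) * Y k j) (\<xi> j))))"

definition count_add :: "'x measure \<Rightarrow> ('x set \<Rightarrow> complex) \<Rightarrow> bool" where
  "count_add M \<mu> \<longleftrightarrow> (\<forall>F::nat \<Rightarrow> 'x set. range F \<subseteq> sets M \<longrightarrow> disjoint_family F \<longrightarrow>
      (\<lambda>n. \<mu> (F n)) sums \<mu> (\<Union>n. F n))"

definition cp_instrument ::
  "'x measure \<Rightarrow> ('x set \<Rightarrow> 'a::cstar_algebra \<Rightarrow> 'h::chilbert \<Rightarrow> 'h) \<Rightarrow> bool" where
  "cp_instrument M I \<longleftrightarrow> (\<forall>A\<in>sets M. cp_map (I A)) \<and>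
     (\<forall>a h k. count_add M (\<lambda>A. cinner h (I A a k)))"

definition star_hom :: "('a::cstar_algebra \<Rightarrow> 'k::chilbert \<Rightarrow> 'k) \<Rightarrow> bool" where
  "star_hom \<pi> \<longleftrightarrow>
     (\<forall>a b. \<pi> (a + b) = (\<lambda>x. \<pi> a x + \<pi> b x)) \<and>
     (\<forall>c a. \<pi> (c *\<^sub>C a) = (\<lambda>x. c *\<^sub>C \<pi> a x)) \<and>
     (\<forall>a. bounded_op (\<pi> a)) \<and>
     (\<forall>a b. \<pi> (a * b) = \<pi> a \<circ> \<pi> b) \<and> \<pi> 1 = id \<and>
     (\<forall>a x y. cinner (\<pi> a x) y = cinner x (\<pi> (cstar a) y))"

definition spectral_measure :: "'x measure \<Rightarrow> ('x set \<Rightarrow> 'k::chilbert \<Rightarrow> 'k) \<Rightarrow> bool" where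
  "spectral_measure M E \<longleftrightarrow>
     (\<forall>A\<in>sets M. bounded_op (E A) \<and> E A \<circ> E A = E A \<and>
        (\<forall>x y. cinner (E A x) y = cinner x (E A y))) \<and>
     E (space M) = id \<and>
     (\<forall>A\<in>sets M. \<forall>B\<in>sets M. E (A \<inter> B) = E A \<circ> E B) \<and>
     (\<forall>x y. count_add M (\<lambda>A. cinner x (E A y)))"

text \<open>Minimal bi-dilation (K, pi, E, V) of I; K is the type 'k. The identity
  I(A,a) = V^* pi(a) E(A) V is expressed through the defining property of the
  adjoint V^*: <h, V^* T k> = <V h, T V k>.\<close>
definition minimal_bidilation ::
  "'x measure \<Rightarrow> ('x set \<Rightarrow> 'a::cstar_algebra \<Rightarrow> 'h::chilbert \<Rightarrow> 'h)
    \<Rightarrow> ('a \<Rightarrow> 'k::chilbert \<Rightarrow> 'k) \<Rightarrow> ('x set \<Rightarrow> 'k \<Rightarrow> 'k) \<Rightarrow> ('h \<Rightarrow> 'k) \<Rightarrow> bool" where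
  "minimal_bidilation M I \<pi> E V \<longleftrightarrow>
     star_hom \<pi> \<and> spectral_measure M E \<and>
     (\<forall>A\<in>sets M. \<forall>a. \<pi> a \<circ> E A = E A \<circ> \<pi> a) \<and>
     bounded_op V \<and>
     (\<forall>A\<in>sets M. \<forall>a h k. cinner h (I A a k) = cinner (V h) (\<pi> a (E A (V k)))) \<and>
     closure (cspan {\<pi> a (E A (V h)) | a A h. A \<in> sets M}) = UNIV"

definition piE :: "('a \<Rightarrow> 'k \<Rightarrow> 'k) \<Rightarrow> ('x set \<Rightarrow> 'k \<Rightarrow> 'k) \<Rightarrow> 'x set \<Rightarrow> 'a \<Rightarrow> 'k \<Rightarrow> 'k" where
  "piE \<pi> E = (\<lambda>A a. \<pi> a \<circ> E A)"

definition concentrated :: "'x measure \<Rightarrow> ('x set \<Rightarrow> 'a \<Rightarrow> 'k \<Rightarrow> 'k) \<Rightarrow> 'x set \<Rightarrow> bool" where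
  "concentrated M J S \<longleftrightarrow> (\<forall>A\<in>sets M. J A = J (A \<inter> S))"

end

theory Submission
  imports Defs
begin

text \<open>For \<open>c \<in> \<A>\<close> and \<open>h \<in> \<H>\<close> one has
  \<open>\<parallel>\<pi>(c) E(A) V h\<parallel>\<^sup>2 = \<langle>h, \<I>(A, c\<^sup>* c) h\<rangle>\<close>, so \<open>\<I>(A) = 0\<close> forces
  \<open>\<pi>(\<A>) E(A) V \<H> = 0\<close>. Since \<open>E(A)\<close> commutes with \<open>\<pi>\<close> and with \<open>E\<close>, the operator
  \<open>\<pi>(a) E(A)\<close> maps every generator \<open>\<pi>(b) E(B) V h\<close> of \<open>\<K>\<close> to
  \<open>E(B) \<pi>(a b) E(A) V h = 0\<close>, hence vanishes by minimality. The converse is immediate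
  from \<open>\<I>(A, a) = V\<^sup>* \<pi>(a) E(A) V\<close>. For concentration, both \<open>\<I>\<close> and \<open>\<pi>E\<close> are
  finitely additive, so each is concentrated on \<open>S\<close> iff it vanishes on all \<open>A - S\<close>.\<close>

lemma cinner_zero_right [simp]: "cinner h (0::'a::complex_inner) = 0"
  using cinner_add_right[of h "0::'a" 0] by simp

lemma scaleC_zero_right [simp]: "c *\<^sub>C (0::'a::complex_vector) = 0"
  using scaleC_add_right[of c "0::'a" 0] by simp

lemma cinner_self_eq_zero_imp:
  fixes x :: "'a::complex_inner"
  assumes "cinner x x = 0"
  shows "x = 0"
proof -
  have "inner x x = 0" using assms by (simp add: inner_Re_cinner)
  then show ?thesis by simp
qed

lemma cinner_ext:
  fixes x y :: "'a::complex_inner"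
  assumes "\<And>h. cinner h x = cinner h y"
  shows "x = y"
proof -
  have "cinner (x - y) x = cinner (x - y) (x - y) + cinner (x - y) y"
    using cinner_add_right[of "x - y" "x - y" y] by simp
  then have "cinner (x - y) (x - y) = 0" using assms[of "x - y"] by simp
  then show ?thesis using cinner_self_eq_zero_imp by fastforce
qed

lemma count_add_empty:
  assumes "count_add M \<mu>"
  shows "\<mu> {} = 0"
proof -
  have "(\<lambda>n::nat. \<mu> {}) sums \<mu> (\<Union>n::nat. {})"
    using assms unfolding count_add_def by (auto simp: disjoint_family_on_def)
  then have "(\<lambda>n::nat. \<mu> {}) \<longlonglongrightarrow> 0"
    using sums_summable summable_LIMSEQ_zero by blast
  then show ?thesis using LIMSEQ_unique tendsto_const by blast
qed

lemma count_add_Un: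
  assumes "count_add M \<mu>" "A \<in> sets M" "B \<in> sets M" "A \<inter> B = {}"
  shows "\<mu> (A \<union> B) = \<mu> A + \<mu> B"
proof -
  define F where "F = (\<lambda>n::nat. if n = 0 then A else if n = 1 then B else {})"
  have "range F \<subseteq> sets M" "disjoint_family F" "(\<Union>n. F n) = A \<union> B"
    using assms(2-4) unfolding F_def disjoint_family_on_def by (auto split: if_splits)
  then have "(\<lambda>n. \<mu> (F n)) sums \<mu> (A \<union> B)"
    using assms(1) unfolding count_add_def by metis
  moreover have "(\<lambda>n. \<mu> (F n)) sums (\<Sum>n\<in>{0,1}. \<mu> (F n))"
    by (rule sums_finite) (auto simp: F_def count_add_empty[OF assms(1)])
  ultimately show ?thesis by (simp add: sums_unique2 F_def)
qed

lemma weakly_count_add_Diff_split: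
  fixes F :: "'x set \<Rightarrow> 'a::complex_inner"
  assumes "\<And>h. count_add M (\<lambda>A. cinner h (F A))" "A \<in> sets M" "S \<in> sets M"
  shows "F A = F (A \<inter> S) + F (A - S)"
proof (rule cinner_ext)
  fix h
  have "A = (A \<inter> S) \<union> (A - S)" by blast
  then have "cinner h (F A) = cinner h (F (A \<inter> S)) + cinner h (F (A - S))"
    using count_add_Un[OF assms(1)[of h], of "A \<inter> S" "A - S"] assms(2,3) by auto
  then show "cinner h (F A) = cinner h (F (A \<inter> S) + F (A - S))"
    by (simp add: cinner_add_right)
qed

lemma concentrated_iff_null_off:
  fixes J :: "'x set \<Rightarrow> 'a \<Rightarrow> 'k \<Rightarrow> 'k::cancel_comm_monoid_add"
  assumes "\<And>A a x. A \<in> sets M \<Longrightarrow> J A a x = J (A \<inter> S) a x + J (A - S) a x"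
  shows "concentrated M J S \<longleftrightarrow> (\<forall>A\<in>sets M. J (A - S) = (\<lambda>a x. 0))"
proof
  assume "concentrated M J S"
  then have "J (A - S) a x = 0" if "A \<in> sets M" for A a x
    using assms[OF that, of a x] that unfolding concentrated_def by simp
  then show "\<forall>A\<in>sets M. J (A - S) = (\<lambda>a x. 0)"
    by blast
next
  assume "\<forall>A\<in>sets M. J (A - S) = (\<lambda>a x. 0)"
  then have "J A a x = J (A \<inter> S) a x" if "A \<in> sets M" for A a x
    using assms[OF that, of a x] that by simp
  then show "concentrated M J S"
    unfolding concentrated_def by blast
qed

lemma clinear_zero: "clinear T \<Longrightarrow> T 0 = 0"
  unfolding clinear_def by (metis add_cancel_right_right)

lemma clinear_sum:
  assumes "clinear T" "finite F"
  shows "T (\<Sum>s\<in>F. c s *\<^sub>C s) = (\<Sum>s\<in>F. c s *\<^sub>C T s)"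
  using assms(2)
proof (induction F rule: finite_induct)
  case empty
  then show ?case using clinear_zero[OF assms(1)] by simp
next
  case (insert x F)
  then show ?case using assms(1) unfolding clinear_def by simp
qed

lemma clinear_comp: "clinear S \<Longrightarrow> clinear T \<Longrightarrow> clinear (S \<circ> T)"
  unfolding clinear_def by simp

lemma bounded_op_bounded_linear:
  assumes "bounded_op T"
  shows "bounded_linear T"
proof -
  obtain C where lin: "clinear T" and C: "\<And>x. norm (T x) \<le> C * norm x"
    using assms unfolding bounded_op_def by blast
  show ?thesis
  proof (rule bounded_linear_intro[where K = C])
    show "T (x + y) = T x + T y" for x y
      using lin unfolding clinear_def by simp
    show "T (r *\<^sub>R x) = r *\<^sub>R T x" for r x
      using lin unfolding clinear_def by (simp add: scaleR_scaleC)
    show "norm (T x) \<le> norm x * C" for x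
      using C[of x] by (simp add: mult.commute)
  qed
qed

lemma clinear_eq_zero_on_dense_cspan:
  fixes T :: "'a::complex_inner \<Rightarrow> 'b::complex_inner"
  assumes "clinear T" "continuous_on UNIV T" "\<And>x. x \<in> G \<Longrightarrow> T x = 0"
    and "closure (cspan G) = UNIV"
  shows "T = (\<lambda>x. 0)"
proof -
  have "cspan G \<subseteq> {x. T x = 0}"
  proof
    fix y assume "y \<in> cspan G"
    then obtain F c where "finite F" "F \<subseteq> G" "y = (\<Sum>s\<in>F. c s *\<^sub>C s)"
      unfolding cspan_def by blast
    then show "y \<in> {x. T x = 0}"
      using clinear_sum[OF assms(1)] assms(3) by (auto intro!: sum.neutral)
  qed
  moreover have "closed {x. T x = 0}"
    using assms(2) by (intro closed_Collect_eq continuous_on_const)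
  ultimately have "closure (cspan G) \<subseteq> {x. T x = 0}"
    by (rule closure_minimal)
  then show ?thesis using assms(4) by auto
qed

lemma star_hom_mult_apply: "star_hom \<pi> \<Longrightarrow> \<pi> (a * b) x = \<pi> a (\<pi> b x)"
  unfolding star_hom_def by simp

lemma star_hom_adjoint: "star_hom \<pi> \<Longrightarrow> cinner (\<pi> a x) y = cinner x (\<pi> (cstar a) y)"
  unfolding star_hom_def by blast

lemma star_hom_bounded_op: "star_hom \<pi> \<Longrightarrow> bounded_op (\<pi> a)"
  unfolding star_hom_def by blast

lemma spectral_measure_bounded_op:
  "spectral_measure M E \<Longrightarrow> A \<in> sets M \<Longrightarrow> bounded_op (E A)"
  unfolding spectral_measure_def by blast

lemma spectral_measure_idem_apply:
  "spectral_measure M E \<Longrightarrow> A \<in> sets M \<Longrightarrow> E A (E A x) = E A x"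
  unfolding spectral_measure_def by (metis comp_apply)

lemma spectral_measure_selfadjoint:
  "spectral_measure M E \<Longrightarrow> A \<in> sets M \<Longrightarrow> cinner (E A x) y = cinner x (E A y)"
  unfolding spectral_measure_def by blast

lemma spectral_measure_commute_apply:
  assumes "spectral_measure M E" "A \<in> sets M" "B \<in> sets M"
  shows "E A (E B x) = E B (E A x)"
proof -
  have "E A \<circ> E B = E B \<circ> E A"
    using assms unfolding spectral_measure_def by (metis Int_commute)
  then show ?thesis by (metis comp_apply)
qed

lemma bidilation_commute:
  assumes "minimal_bidilation M I \<pi> E V" "B \<in> sets M"
  shows "\<pi> a (E B x) = E B (\<pi> a x)"
proof -
  have "\<pi> a \<circ> E B = E B \<circ> \<pi> a"
    using assms unfolding minimal_bidilation_def by blast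
  then show ?thesis by (metis comp_apply)
qed

lemma bidilation_cinner_self:
  assumes mb: "minimal_bidilation M I \<pi> E V" and A: "A \<in> sets M"
  shows "cinner (\<pi> c (E A (V h))) (\<pi> c (E A (V h))) = cinner h (I A (cstar c * c) h)"
proof -
  have sh: "star_hom \<pi>" and sm: "spectral_measure M E"
    using mb unfolding minimal_bidilation_def by auto
  let ?y = "E A (V h)"
  have "cinner (\<pi> c ?y) (\<pi> c ?y) = cinner ?y (\<pi> (cstar c * c) ?y)"
    by (simp add: star_hom_adjoint[OF sh] star_hom_mult_apply[OF sh])
  also have "\<dots> = cinner (V h) (\<pi> (cstar c * c) (E A ?y))"
    by (simp add: spectral_measure_selfadjoint[OF sm A] bidilation_commute[OF mb A])
  also have "\<dots> = cinner (V h) (\<pi> (cstar c * c) ?y)"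
    by (simp add: spectral_measure_idem_apply[OF sm A])
  also have "\<dots> = cinner h (I A (cstar c * c) h)"
    using mb A unfolding minimal_bidilation_def by simp
  finally show ?thesis .
qed

lemma bidilation_piE_null_on_generators:
  assumes mb: "minimal_bidilation M I \<pi> E V" and A: "A \<in> sets M" and B: "B \<in> sets M"
    and null: "I A = (\<lambda>a x. 0)"
  shows "\<pi> a (E A (\<pi> b (E B (V h)))) = 0"
proof -
  have sh: "star_hom \<pi>" and sm: "spectral_measure M E"
    using mb unfolding minimal_bidilation_def by auto
  have range_null: "\<pi> c (E A (V h)) = 0" for c
    using bidilation_cinner_self[OF mb A, of c h] null by (simp add: cinner_self_eq_zero_imp)
  have "\<pi> a (E A (\<pi> b (E B (V h)))) = E B (\<pi> (a * b) (E A (V h)))"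
    by (simp add: star_hom_mult_apply[OF sh] bidilation_commute[OF mb]
        spectral_measure_commute_apply[OF sm A B] A B)
  also have "\<dots> = 0"
    using range_null clinear_zero spectral_measure_bounded_op[OF sm B]
    unfolding bounded_op_def by metis
  finally show ?thesis .
qed

lemma bidilation_null_iff_piE_null:
  assumes mb: "minimal_bidilation M I \<pi> E V" and A: "A \<in> sets M"
  shows "I A = (\<lambda>a x. 0) \<longleftrightarrow> piE \<pi> E A = (\<lambda>a x. 0)"
proof
  assume null: "I A = (\<lambda>a x. 0)"
  have sh: "star_hom \<pi>" and sm: "spectral_measure M E"
    using mb unfolding minimal_bidilation_def by auto
  have "\<pi> a \<circ> E A = (\<lambda>x. 0)" for a
  proof (rule clinear_eq_zero_on_dense_cspan)
    have piop: "bounded_op (\<pi> a)" and Eop: "bounded_op (E A)"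
      using star_hom_bounded_op[OF sh] spectral_measure_bounded_op[OF sm A] .
    then show "clinear (\<pi> a \<circ> E A)"
      unfolding bounded_op_def by (simp add: clinear_comp)
    show "continuous_on UNIV (\<pi> a \<circ> E A)"
      using piop Eop by (intro continuous_on_compose linear_continuous_on bounded_op_bounded_linear)
    show "closure (cspan {\<pi> b (E B (V h)) | b B h. B \<in> sets M}) = UNIV"
      using mb unfolding minimal_bidilation_def by simp
    fix x assume "x \<in> {\<pi> b (E B (V h)) | b B h. B \<in> sets M}"
    then obtain b B h where "B \<in> sets M" "x = \<pi> b (E B (V h))"
      by blast
    then show "(\<pi> a \<circ> E A) x = 0"
      using bidilation_piE_null_on_generators[OF mb A _ null] by simp
  qed
  then show "piE \<pi> E A = (\<lambda>a x. 0)"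
    unfolding piE_def by (rule ext)
next
  assume "piE \<pi> E A = (\<lambda>a x. 0)"
  then have "\<pi> a (E A (V k)) = 0" for a k
    unfolding piE_def by (metis comp_apply)
  then have "cinner h (I A a k) = cinner h 0" for h a k
    using mb A unfolding minimal_bidilation_def by simp
  then have "I A a k = 0" for a k
    by (rule cinner_ext)
  then show "I A = (\<lambda>a x. 0)"
    by (intro ext)
qed

lemma instrument_Diff_split:
  assumes "cp_instrument M I" "A \<in> sets M" "S \<in> sets M"
  shows "I A a k = I (A \<inter> S) a k + I (A - S) a k"
  using assms unfolding cp_instrument_def
  by (intro weakly_count_add_Diff_split[where F = "\<lambda>A. I A a k"]) auto

lemma bidilation_piE_Diff_split:
  assumes mb: "minimal_bidilation M I \<pi> E V" and "A \<in> sets M" "S \<in> sets M"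
  shows "piE \<pi> E A a k = piE \<pi> E (A \<inter> S) a k + piE \<pi> E (A - S) a k"
proof -
  have "E A k = E (A \<inter> S) k + E (A - S) k"
    using mb assms(2,3) unfolding minimal_bidilation_def spectral_measure_def
    by (intro weakly_count_add_Diff_split[where F = "\<lambda>A. E A k"]) auto
  moreover have "clinear (\<pi> a)"
    using mb unfolding minimal_bidilation_def star_hom_def bounded_op_def by simp
  ultimately show ?thesis
    unfolding piE_def clinear_def by simp
qed

theorem proposition2p16:
  fixes M :: "'x measure"
    and I :: "'x set \<Rightarrow> 'a::cstar_algebra \<Rightarrow> 'h::chilbert \<Rightarrow> 'h"
    and \<pi> :: "'a \<Rightarrow> 'k::chilbert \<Rightarrow> 'k"
    and E :: "'x set \<Rightarrow> 'k \<Rightarrow> 'k"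
    and V :: "'h \<Rightarrow> 'k"
  assumes "cp_instrument M I"
    and "minimal_bidilation M I \<pi> E V"
  shows "(\<forall>A\<in>sets M. (I A = (\<lambda>a x. 0) \<longleftrightarrow> piE \<pi> E A = (\<lambda>a x. 0))) \<and>
         (\<forall>S\<in>sets M. (concentrated M I S \<longleftrightarrow> concentrated M (piE \<pi> E) S))"
proof (intro conjI ballI)
  fix A assume "A \<in> sets M"
  then show "I A = (\<lambda>a x. 0) \<longleftrightarrow> piE \<pi> E A = (\<lambda>a x. 0)"
    by (rule bidilation_null_iff_piE_null[OF assms(2)])
next
  fix S assume S: "S \<in> sets M"
  have "concentrated M I S \<longleftrightarrow> (\<forall>A\<in>sets M. I (A - S) = (\<lambda>a x. 0))"
    using instrument_Diff_split[OF assms(1) _ S] by (rule concentrated_iff_null_off)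
  also have "\<dots> \<longleftrightarrow> (\<forall>A\<in>sets M. piE \<pi> E (A - S) = (\<lambda>a x. 0))"
    using bidilation_null_iff_piE_null[OF assms(2)] S by blast
  also have "\<dots> \<longleftrightarrow> concentrated M (piE \<pi> E) S"
    using bidilation_piE_Diff_split[OF assms(2) _ S] by (rule concentrated_iff_null_off[symmetric])
  finally show "concentrated M I S \<longleftrightarrow> concentrated M (piE \<pi> E) S" .
qed

end
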